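(* Let $u:X\to\mathbb{R}$ be non-constant affine. Let $\succ_{HP}$ be a hope-and-prepare preference with unique representation $(u,C_{HP},D_{HP})$, $\succ_T$ a twofold multiprior preference with unique representation $(u,C_T,D_T)$, and $\succ_B$ a Bewley preference with unique representation $(u,C_B)$. Then: (i) $\succ_B$ is more conservative than $\succ_{HP}$ if and only if $C_{HP}\cup D_{HP}\subseteq C_B$; (ii) $\succ_T$ is more conservative than $\succ_{HP}$ if and only if $C_{HP}\subseteq C_T$ and $D_{HP}\subseteq D_T$.
   Context: $S$ is a set of states with algebra $\Sigma$; $X$ is a non-singleton convex subset of a real vector space; $\mathcal{F}$ is the set of simple acts $f:S\to X$ ($\Sigma$-measurable, finitely many values); $\Delta$ is the set of finitely additive probability measures on $(S,\Sigma)$ with weak* topology. A relation $\succ$ on $\mathcal{F}$ is a hope-and-prepare preference with representation $(u,C,D)$ ($C,D\subseteq\Delta$ convex compact, $C\cap D\ne\emptyset$) if $f\succ g$ iff $\min_{p\in C}\int u(f)dp>\min_{p\in C}\int u(g)dp$ and $\max_{p\in D}\int u(f)dp>\max_{p\in D}\int u(g)dp$. It is a twofold multiprior preference with representation $(u,C,D)$ ($C,D$ convex compact, $C\cap D\ne\emptyset$) if $f\succ g$ iff $\min_{p\in C}\int u(f)dp>\max_{p\in D}\int u(g)dp$. It is a Bewley preference with representation $(u,C)$ ($C$ non-empty convex compact) if $f\succ g$ iff $\int u(f)dp>\int u(g)dp$ for all $p\in C$. "Unique representation" means the sets are unique and $u$ is unique up to positive affine transformation. $\succ_1$ is more conservative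 than $\succ_2$ if $f\succ_1 g$ implies $f\succ_2 g$ for all $f,g\in\mathcal{F}$. *)

theory Defs
  imports "HOL-Analysis.Analysis"
begin

text \<open>States are the elements of the type 's; Alg is an algebra of subsets of UNIV.
  Outcomes live in a convex set X of a real vector space 'x.\<close>

definition simple_acts :: "'s set set \<Rightarrow> 'x set \<Rightarrow> ('s \<Rightarrow> 'x) set" where
  "simple_acts Alg X = {f. (\<forall>s. f s \<in> X) \<and> finite (range f) \<and> (\<forall>x. f -` {x} \<in> Alg)}"

definition fa_probs :: "'s set set \<Rightarrow> ('s set \<Rightarrow> real) set" where
  "fa_probs Alg = {p. (\<forall>A. A \<notin> Alg \<longrightarrow> p A = 0) \<and> (\<forall>A\<in>Alg. 0 \<le> p A) \<and> p UNIV = 1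
     \<and> (\<forall>A\<in>Alg. \<forall>B\<in>Alg. A \<inter> B = {} \<longrightarrow> p (A \<union> B) = p A + p B)}"

definition sint :: "('s set \<Rightarrow> real) \<Rightarrow> ('s \<Rightarrow> real) \<Rightarrow> real" where
  "sint p g = (\<Sum>r\<in>range g. r * p (g -` {r}))"

definition convex_probs :: "('s set \<Rightarrow> real) set \<Rightarrow> bool" where
  "convex_probs C \<longleftrightarrow> (\<forall>p\<in>C. \<forall>q\<in>C. \<forall>t::real. 0 \<le> t \<and> t \<le> 1 \<longrightarrow> (\<lambda>A. t * p A + (1 - t) * q A) \<in> C)"

text \<open>Weak* compactness: on the set of probability charges the weak* topology is the
  topology of setwise convergence on Alg (product topology on Alg \<rightarrow> real).\<close>
definition wstar_compact :: "'s set set \<Rightarrow> ('s set \<Rightarrow> real) set \<Rightarrow> bool" where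
  "wstar_compact Alg C \<longleftrightarrow> compactin (product_topology (\<lambda>_. euclideanreal) Alg) ((\<lambda>p. restrict p Alg) ` C)"

definition good_prior_set :: "'s set set \<Rightarrow> ('s set \<Rightarrow> real) set \<Rightarrow> bool" where
  "good_prior_set Alg C \<longleftrightarrow> C \<subseteq> fa_probs Alg \<and> convex_probs C \<and> wstar_compact Alg C"

definition affine_on :: "'x::real_vector set \<Rightarrow> ('x \<Rightarrow> real) \<Rightarrow> bool" where
  "affine_on X u \<longleftrightarrow> (\<forall>x\<in>X. \<forall>y\<in>X. \<forall>t::real. 0 \<le> t \<and> t \<le> 1 \<longrightarrow>
      u (t *\<^sub>R x + (1 - t) *\<^sub>R y) = t * u x + (1 - t) * u y)"

definition minE :: "('s set \<Rightarrow> real) set \<Rightarrow> ('s \<Rightarrow> real) \<Rightarrow> real" where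
  "minE C g = Inf ((\<lambda>p. sint p g) ` C)"

definition maxE :: "('s set \<Rightarrow> real) set \<Rightarrow> ('s \<Rightarrow> real) \<Rightarrow> real" where
  "maxE C g = Sup ((\<lambda>p. sint p g) ` C)"

definition HP_rep :: "'s set set \<Rightarrow> 'x::real_vector set \<Rightarrow> (('s \<Rightarrow> 'x) \<Rightarrow> ('s \<Rightarrow> 'x) \<Rightarrow> bool)
    \<Rightarrow> ('x \<Rightarrow> real) \<Rightarrow> ('s set \<Rightarrow> real) set \<Rightarrow> ('s set \<Rightarrow> real) set \<Rightarrow> bool" where
  "HP_rep Alg X P u C D \<longleftrightarrow> affine_on X u \<and> good_prior_set Alg C \<and> good_prior_set Alg D \<and> C \<inter> D \<noteq> {}
     \<and> (\<forall>f\<in>simple_acts Alg X. \<forall>g\<in>simple_acts Alg X.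
          P f g \<longleftrightarrow> minE C (u \<circ> f) > minE C (u \<circ> g) \<and> maxE D (u \<circ> f) > maxE D (u \<circ> g))"

definition TM_rep :: "'s set set \<Rightarrow> 'x::real_vector set \<Rightarrow> (('s \<Rightarrow> 'x) \<Rightarrow> ('s \<Rightarrow> 'x) \<Rightarrow> bool)
    \<Rightarrow> ('x \<Rightarrow> real) \<Rightarrow> ('s set \<Rightarrow> real) set \<Rightarrow> ('s set \<Rightarrow> real) set \<Rightarrow> bool" where
  "TM_rep Alg X P u C D \<longleftrightarrow> affine_on X u \<and> good_prior_set Alg C \<and> good_prior_set Alg D \<and> C \<inter> D \<noteq> {}
     \<and> (\<forall>f\<in>simple_acts Alg X. \<forall>g\<in>simple_acts Alg X.
          P f g \<longleftrightarrow> minE C (u \<circ> f) > maxE D (u \<circ> g))"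

definition B_rep :: "'s set set \<Rightarrow> 'x::real_vector set \<Rightarrow> (('s \<Rightarrow> 'x) \<Rightarrow> ('s \<Rightarrow> 'x) \<Rightarrow> bool)
    \<Rightarrow> ('x \<Rightarrow> real) \<Rightarrow> ('s set \<Rightarrow> real) set \<Rightarrow> bool" where
  "B_rep Alg X P u C \<longleftrightarrow> affine_on X u \<and> good_prior_set Alg C \<and> C \<noteq> {}
     \<and> (\<forall>f\<in>simple_acts Alg X. \<forall>g\<in>simple_acts Alg X.
          P f g \<longleftrightarrow> (\<forall>p\<in>C. sint p (u \<circ> f) > sint p (u \<circ> g)))"

definition pos_affine_equiv :: "'x set \<Rightarrow> ('x \<Rightarrow> real) \<Rightarrow> ('x \<Rightarrow> real) \<Rightarrow> bool" where
  "pos_affine_equiv X v u \<longleftrightarrow> (\<exists>a>0. \<exists>b. \<forall>x\<in>X. v x = a * u x + b)"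

definition HP_unique_rep where
  "HP_unique_rep Alg X P u C D \<longleftrightarrow> HP_rep Alg X P u C D \<and>
     (\<forall>v C' D'. HP_rep Alg X P v C' D' \<longrightarrow> C' = C \<and> D' = D \<and> pos_affine_equiv X v u)"

definition TM_unique_rep where
  "TM_unique_rep Alg X P u C D \<longleftrightarrow> TM_rep Alg X P u C D \<and>
     (\<forall>v C' D'. TM_rep Alg X P v C' D' \<longrightarrow> C' = C \<and> D' = D \<and> pos_affine_equiv X v u)"

definition B_unique_rep where
  "B_unique_rep Alg X P u C \<longleftrightarrow> B_rep Alg X P u C \<and>
     (\<forall>v C'. B_rep Alg X P v C' \<longrightarrow> C' = C \<and> pos_affine_equiv X v u)"

definition more_conservative :: "('s \<Rightarrow> 'x) set \<Rightarrow> (('s \<Rightarrow> 'x) \<Rightarrow> ('s \<Rightarrow> 'x) \<Rightarrow> bool)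
    \<Rightarrow> (('s \<Rightarrow> 'x) \<Rightarrow> ('s \<Rightarrow> 'x) \<Rightarrow> bool) \<Rightarrow> bool" where
  "more_conservative F P1 P2 \<longleftrightarrow> (\<forall>f\<in>F. \<forall>g\<in>F. P1 f g \<longrightarrow> P2 f g)"

end

theory Submission
  imports Defs
begin

text \<open>
  The "if" directions are monotonicity of lowest and highest expected utility in the set of
  priors: an act that is better under every prior of C_B is better under the minimising prior
  of C_HP and the maximising prior of D_HP. If PT ranks f over g, then
  min_C_HP u(f) >= min_C_T u(f) > max_D_T u(g) >= max_D_HP u(g) >= min_C_HP u(g), and
  max_D_HP u(f) >= min_C_HP u(f) because C_HP and D_HP meet.

  For the "only if" directions, a prior p0 outside a convex weak*-compact set C' of priors
  is strictly separated from C' by a simple utility profile compared with a constant: every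
  prior of C' rates the profile above a level c, while p0 rates it below c. Realising both
  as acts yields a pair ranked by the more conservative relation but not by the
  hope-and-prepare one. The separation itself uses compactness to reduce to finitely many
  events, and there it is the nearest-point argument in Euclidean space.
\<close>

section \<open>Simple functions and their integrals\<close>

definition simple_fun :: "'s set set \<Rightarrow> ('s \<Rightarrow> 'b) \<Rightarrow> bool" where
  "simple_fun Alg g \<longleftrightarrow> finite (range g) \<and> (\<forall>x. g -` {x} \<in> Alg)"

lemma simple_acts_iff: "f \<in> simple_acts Alg X \<longleftrightarrow> (\<forall>s. f s \<in> X) \<and> simple_fun Alg f"
  unfolding simple_acts_def simple_fun_def by blast

lemma fa_probs_empty:
  assumes "p \<in> fa_probs Alg"
  shows "p {} = 0"
proof (cases "{} \<in> Alg")
  case True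
  then have "p ({} \<union> {}) = p {} + p {}"
    using assms unfolding fa_probs_def by blast
  then show ?thesis by simp
qed (use assms in \<open>auto simp: fa_probs_def\<close>)

lemma good_prior_setD:
  assumes "good_prior_set Alg C"
  shows "C \<subseteq> fa_probs Alg" "convex_probs C" "wstar_compact Alg C"
  using assms unfolding good_prior_set_def by auto

context
  fixes Alg :: "'s set set"
  assumes alg: "algebra UNIV Alg"
begin

interpretation algebra UNIV Alg by (fact alg)

lemma fa_probs_finite_UN:
  assumes p: "p \<in> fa_probs Alg" and "finite I" "P ` I \<subseteq> Alg" "disjoint_family_on P I"
  shows "p (\<Union>i\<in>I. P i) = (\<Sum>i\<in>I. p (P i))"
  using assms(2-)
proof (induction I rule: finite_induct)
  case empty
  then show ?case using fa_probs_empty[OF p] by simp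
next
  case (insert i I)
  have "P i \<inter> (\<Union>j\<in>I. P j) = {}"
    using insert.prems(2) insert.hyps(2) by (auto simp: disjoint_family_on_def)
  moreover have "(\<Union>j\<in>I. P j) \<in> Alg"
    using insert by (intro finite_UN) auto
  ultimately have "p (P i \<union> (\<Union>j\<in>I. P j)) = p (P i) + p (\<Union>j\<in>I. P j)"
    using p insert.prems(1) unfolding fa_probs_def by blast
  then show ?case
    using insert by (simp add: disjoint_family_on_insert)
qed

lemma sint_partition:
  assumes p: "p \<in> fa_probs Alg" and fin: "finite I" and PA: "P ` I \<subseteq> Alg"
    and dj: "disjoint_family_on P I" and cov: "(\<Union>i\<in>I. P i) = UNIV"
    and gv: "\<And>i s. i \<in> I \<Longrightarrow> s \<in> P i \<Longrightarrow> g s = v i"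
  shows "sint p g = (\<Sum>i\<in>I. v i * p (P i))"
proof -
  have cell: "\<exists>i\<in>I. s \<in> P i" for s
    using cov by blast
  have pre: "g -` {r} = (\<Union>i\<in>{i\<in>I. v i = r}. P i)" for r
  proof
    show "g -` {r} \<subseteq> (\<Union>i\<in>{i\<in>I. v i = r}. P i)"
    proof
      fix s assume "s \<in> g -` {r}"
      moreover obtain i where "i \<in> I" "s \<in> P i"
        using cell by blast
      ultimately show "s \<in> (\<Union>i\<in>{i\<in>I. v i = r}. P i)"
        using gv by auto
    qed
  qed (use gv in auto)
  have "sint p g = (\<Sum>r\<in>v ` I. r * p (g -` {r}))"
    unfolding sint_def
  proof (rule sum.mono_neutral_left)
    show "range g \<subseteq> v ` I"
      using cell gv by (metis imageI image_subsetI)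
    show "\<forall>r\<in>v ` I - range g. r * p (g -` {r}) = 0"
    proof
      fix r assume "r \<in> v ` I - range g"
      then have "g -` {r} = {}"
        by blast
      then show "r * p (g -` {r}) = 0"
        using fa_probs_empty[OF p] by simp
    qed
  qed (use fin in simp)
  also have "\<dots> = (\<Sum>r\<in>v ` I. (\<Sum>i\<in>{i\<in>I. v i = r}. v i * p (P i)))"
  proof (rule sum.cong)
    fix r
    have "p (g -` {r}) = (\<Sum>i\<in>{i\<in>I. v i = r}. p (P i))"
      unfolding pre using fin PA dj
      by (intro fa_probs_finite_UN[OF p]) (auto simp: disjoint_family_on_def)
    then show "r * p (g -` {r}) = (\<Sum>i\<in>{i\<in>I. v i = r}. v i * p (P i))"
      by (simp add: sum_distrib_left)
  qed simp
  also have "\<dots> = (\<Sum>i\<in>I. v i * p (P i))"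
    using sum.image_gen[OF fin, of "\<lambda>i. v i * p (P i)" v] by simp
  finally show ?thesis .
qed

lemma simple_fun_comp2:
  assumes g: "simple_fun Alg g" and h: "simple_fun Alg h"
  shows "simple_fun Alg (\<lambda>s. G (g s) (h s))"
proof -
  let ?I = "range g \<times> range h"
  have fin: "finite ?I"
    using g h unfolding simple_fun_def by simp
  have "range (\<lambda>s. G (g s) (h s)) \<subseteq> case_prod G ` ?I"
    by fastforce
  then have "finite (range (\<lambda>s. G (g s) (h s)))"
    using fin finite_subset by blast
  moreover have "(\<lambda>s. G (g s) (h s)) -` {r} \<in> Alg" for r
  proof -
    let ?J = "{ab\<in>?I. G (fst ab) (snd ab) = r}"
    have "(\<lambda>s. G (g s) (h s)) -` {r} = (\<Union>ab\<in>?J. g -` {fst ab} \<inter> h -` {snd ab})"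
      by force
    moreover have "g -` {fst ab} \<inter> h -` {snd ab} \<in> Alg" for ab
      using g h unfolding simple_fun_def by (intro Int) auto
    ultimately show ?thesis
      using fin by (simp add: finite_UN)
  qed
  ultimately show ?thesis
    unfolding simple_fun_def by blast
qed

lemma simple_fun_comp:
  "simple_fun Alg g \<Longrightarrow> simple_fun Alg (\<lambda>s. m (g s))"
  using simple_fun_comp2[of g g "\<lambda>a b. m a"] by simp

lemma simple_fun_const: "simple_fun Alg (\<lambda>s. c)"
proof -
  have "(\<lambda>s. c) -` {x} = (if x = c then UNIV else {})" for x
    by auto
  then show ?thesis
    unfolding simple_fun_def by simp
qed

lemma simple_fun_indicator:
  assumes "A \<in> Alg"
  shows "simple_fun Alg (indicator A :: 's \<Rightarrow> real)"
proof -
  have "(indicator A :: 's \<Rightarrow> real) -` {x} = (if x = 1 then A else if x = 0 then UNIV - A else {})" for x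
    by (auto simp: indicator_def)
  moreover have "range (indicator A :: 's \<Rightarrow> real) \<subseteq> {0, 1}"
    by (auto simp: indicator_def)
  ultimately show ?thesis
    unfolding simple_fun_def using assms by (simp add: compl_sets finite_subset)
qed

context
  fixes p :: "'s set \<Rightarrow> real"
  assumes p: "p \<in> fa_probs Alg"
begin

lemma sint_linear:
  assumes g: "simple_fun Alg g" and h: "simple_fun Alg h"
  shows "sint p (\<lambda>s. a * g s + b * h s) = a * sint p g + b * sint p h"
proof -
  let ?I = "range g \<times> range h"
  let ?P = "\<lambda>xy. g -` {fst xy} \<inter> h -` {snd xy}"
  have fin: "finite ?I" and PA: "?P ` ?I \<subseteq> Alg"
    using g h by (auto simp: simple_fun_def)
  have dj: "disjoint_family_on ?P ?I" and cov: "(\<Union>i\<in>?I. ?P i) = UNIV"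
    by (auto simp: disjoint_family_on_def)
  note part = sint_partition[OF p fin PA dj cov]
  have "sint p (\<lambda>s. a * g s + b * h s) = (\<Sum>xy\<in>?I. (a * fst xy + b * snd xy) * p (?P xy))"
    by (rule part) auto
  moreover have "sint p g = (\<Sum>xy\<in>?I. fst xy * p (?P xy))"
    by (rule part) auto
  moreover have "sint p h = (\<Sum>xy\<in>?I. snd xy * p (?P xy))"
    by (rule part) auto
  ultimately show ?thesis
    by (simp add: algebra_simps sum.distrib sum_distrib_left)
qed

lemma sint_const: "sint p (\<lambda>s. c) = c"
proof -
  have "sint p (\<lambda>s. c) = (\<Sum>i\<in>{()}. c * p UNIV)"
    by (rule sint_partition[OF p]) (auto simp: top disjoint_family_on_def)
  then show ?thesis
    using p by (simp add: fa_probs_def)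
qed

lemma sint_affine:
  "simple_fun Alg g \<Longrightarrow> sint p (\<lambda>s. a + b * g s) = a + b * sint p g"
  using sint_linear[OF simple_fun_const, of g a 1 b] sint_const[of 1] by simp

lemma sint_indicator:
  assumes "A \<in> Alg"
  shows "sint p (indicator A) = p A"
proof -
  have "sint p (indicator A) = (\<Sum>b\<in>{True, False}. of_bool b * p (if b then A else UNIV - A))"
    by (rule sint_partition[OF p])
       (auto simp: assms compl_sets disjoint_family_on_def indicator_def)
  then show ?thesis
    by simp
qed

lemma sint_bounds:
  assumes g: "simple_fun Alg g" and "\<And>s. g s \<in> {a..b}"
  shows "sint p g \<in> {a..b}"
proof -
  let ?P = "\<lambda>r. g -` {r}"
  have fin: "finite (range g)" and PA: "?P ` range g \<subseteq> Alg"
    using g by (auto simp: simple_fun_def)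
  have dj: "disjoint_family_on ?P (range g)"
    by (auto simp: disjoint_family_on_def)
  have nn: "0 \<le> p (?P r)" for r
    using PA p by (cases "r \<in> range g") (auto simp: fa_probs_def vimage_singleton_eq)
  have "(\<Union>r\<in>range g. ?P r) = UNIV"
    by blast
  then have total: "(\<Sum>r\<in>range g. p (?P r)) = 1"
    using fa_probs_finite_UN[OF p fin PA dj] p by (simp add: fa_probs_def)
  have "a = (\<Sum>r\<in>range g. a * p (?P r))"
    by (simp only: sum_distrib_left[symmetric] total mult_1_right)
  also have "\<dots> \<le> sint p g"
    unfolding sint_def using nn assms(2) by (auto intro!: sum_mono mult_right_mono)
  finally have "a \<le> sint p g" .
  have "sint p g \<le> (\<Sum>r\<in>range g. b * p (?P r))"
    unfolding sint_def using nn assms(2) by (auto intro!: sum_mono mult_right_mono)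
  also have "\<dots> = b"
    by (simp only: sum_distrib_left[symmetric] total mult_1_right)
  finally show ?thesis
    using \<open>a \<le> sint p g\<close> by (intro atLeastAtMost_iff[THEN iffD2] conjI)
qed

lemma simple_fun_sint_indicator_comb:
  assumes "finite F" "F \<subseteq> Alg"
  shows "simple_fun Alg (\<lambda>s. \<Sum>A\<in>F. w A * indicator A s)
    \<and> sint p (\<lambda>s. \<Sum>A\<in>F. w A * indicator A s) = (\<Sum>A\<in>F. w A * p A)"
  using assms
proof (induction F rule: finite_induct)
  case empty
  then show ?case
    using sint_const[of 0] simple_fun_const[of "0::real"] by simp
next
  case (insert A F)
  then have A: "simple_fun Alg (indicator A :: 's \<Rightarrow> real)" "sint p (indicator A) = p A"
    by (auto intro: simple_fun_indicator sint_indicator)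
  from insert have IH: "simple_fun Alg (\<lambda>s. \<Sum>B\<in>F. w B * indicator B s)"
    "sint p (\<lambda>s. \<Sum>B\<in>F. w B * indicator B s) = (\<Sum>B\<in>F. w B * p B)"
    by simp_all
  have eq: "(\<lambda>s. \<Sum>B\<in>insert A F. w B * indicator B s)
      = (\<lambda>s. w A * indicator A s + (\<Sum>B\<in>F. w B * indicator B s))"
    by (rule ext) (simp only: sum.insert[OF insert.hyps])
  have "sint p (\<lambda>s. w A * indicator A s + (\<Sum>B\<in>F. w B * indicator B s))
      = w A * p A + (\<Sum>B\<in>F. w B * p B)"
    using sint_linear[OF A(1) IH(1), of "w A" 1] A(2) IH(2) by simp
  moreover have "simple_fun Alg (\<lambda>s. w A * indicator A s + (\<Sum>B\<in>F. w B * indicator B s))"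
    using simple_fun_comp2[OF A(1) IH(1), of "\<lambda>x y. w A * x + y"] .
  ultimately show ?case
    unfolding eq sum.insert[OF insert.hyps] by blast
qed

end

end

section \<open>Lowest and highest expected utility over a compact set of priors\<close>

lemma compact_image_wstar_compact:
  assumes "wstar_compact Alg C"
    and "continuous_map (product_topology (\<lambda>_. euclideanreal) Alg) euclideanreal \<Phi>"
    and "\<And>p. p \<in> C \<Longrightarrow> G p = \<Phi> (restrict p Alg)"
  shows "compact (G ` C)"
proof -
  have "G ` C = \<Phi> ` (\<lambda>p. restrict p Alg) ` C"
    using assms(3) by (auto simp: image_image)
  moreover have "compactin euclideanreal (\<Phi> ` (\<lambda>p. restrict p Alg) ` C)"
    using image_compactin assms(1,2) unfolding wstar_compact_def by blast
  ultimately show ?thesis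
    by simp
qed

lemma compact_sint_image:
  assumes "wstar_compact Alg C" "simple_fun Alg h"
  shows "compact ((\<lambda>p. sint p h) ` C)"
proof (rule compact_image_wstar_compact[OF assms(1)])
  show "continuous_map (product_topology (\<lambda>_. euclideanreal) Alg) euclideanreal
      (\<lambda>q. \<Sum>r\<in>range h. r * q (h -` {r}))"
    using assms(2) unfolding simple_fun_def
    by (intro continuous_map_sum continuous_map_real_mult_left continuous_map_product_projection) auto
  show "sint p h = (\<Sum>r\<in>range h. r * (restrict p Alg) (h -` {r}))" for p
    using assms(2) unfolding simple_fun_def sint_def by simp
qed

context
  fixes Alg :: "'s set set" and C :: "('s set \<Rightarrow> real) set" and h :: "'s \<Rightarrow> real"
  assumes compact: "wstar_compact Alg C" and simple: "simple_fun Alg h"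
begin

lemma minE_le_sint: "p \<in> C \<Longrightarrow> minE C h \<le> sint p h"
  unfolding minE_def using compact_sint_image[OF compact simple]
  by (intro cInf_lower imageI bounded_imp_bdd_below compact_imp_bounded)

lemma sint_le_maxE: "p \<in> C \<Longrightarrow> sint p h \<le> maxE C h"
  unfolding maxE_def using compact_sint_image[OF compact simple]
  by (intro cSup_upper imageI bounded_imp_bdd_above compact_imp_bounded)

lemma minE_attained:
  assumes "C \<noteq> {}"
  obtains p where "p \<in> C" "minE C h = sint p h"
proof -
  have "Inf ((\<lambda>p. sint p h) ` C) \<in> (\<lambda>p. sint p h) ` C"
    using assms compact_sint_image[OF compact simple]
    by (intro closed_contains_Inf bounded_imp_bdd_below compact_imp_bounded compact_imp_closed) auto
  then show ?thesis
    using that unfolding minE_def by auto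
qed

lemma maxE_attained:
  assumes "C \<noteq> {}"
  obtains p where "p \<in> C" "maxE C h = sint p h"
proof -
  have "Sup ((\<lambda>p. sint p h) ` C) \<in> (\<lambda>p. sint p h) ` C"
    using assms compact_sint_image[OF compact simple]
    by (intro closed_contains_Sup bounded_imp_bdd_above compact_imp_bounded compact_imp_closed) auto
  then show ?thesis
    using that unfolding maxE_def by auto
qed

lemma less_minE_iff: "C \<noteq> {} \<Longrightarrow> c < minE C h \<longleftrightarrow> (\<forall>p\<in>C. c < sint p h)"
  by (metis minE_attained minE_le_sint order_less_le_trans)

lemma maxE_less_iff: "C \<noteq> {} \<Longrightarrow> maxE C h < c \<longleftrightarrow> (\<forall>p\<in>C. sint p h < c)"
  by (metis maxE_attained sint_le_maxE order_le_less_trans)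

end

lemma minE_le_maxE:
  assumes "wstar_compact Alg C" "wstar_compact Alg D" "simple_fun Alg h" "C \<inter> D \<noteq> {}"
  shows "minE C h \<le> maxE D h"
proof -
  obtain p where "p \<in> C" "p \<in> D"
    using assms(4) by blast
  then show ?thesis
    using minE_le_sint[OF assms(1,3)] sint_le_maxE[OF assms(2,3)] by (meson order_trans)
qed

lemma minE_antimono:
  assumes "wstar_compact Alg D" "simple_fun Alg h" "C \<noteq> {}" "C \<subseteq> D"
  shows "minE D h \<le> minE C h"
  unfolding minE_def using assms
  by (intro cInf_superset_mono image_mono bounded_imp_bdd_below compact_imp_bounded compact_sint_image) auto

lemma maxE_mono:
  assumes "wstar_compact Alg D" "simple_fun Alg h" "C \<noteq> {}" "C \<subseteq> D"
  shows "maxE C h \<le> maxE D h"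
  unfolding maxE_def using assms
  by (intro cSup_subset_mono image_mono bounded_imp_bdd_above compact_imp_bounded compact_sint_image) auto

lemma minE_strict_mono:
  assumes "wstar_compact Alg C" "C \<noteq> {}" "simple_fun Alg f" "simple_fun Alg g"
    and "\<And>p. p \<in> C \<Longrightarrow> sint p g < sint p f"
  shows "minE C g < minE C f"
  using assms by (meson less_minE_iff minE_le_sint order_le_less_trans)

lemma maxE_strict_mono:
  assumes "wstar_compact Alg C" "C \<noteq> {}" "simple_fun Alg f" "simple_fun Alg g"
    and "\<And>p. p \<in> C \<Longrightarrow> sint p g < sint p f"
  shows "maxE C g < maxE C f"
  using assms by (meson maxE_less_iff sint_le_maxE order_less_le_trans)

lemma
  assumes "algebra UNIV Alg" "C \<subseteq> fa_probs Alg" "C \<noteq> {}"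
  shows minE_const: "minE C (\<lambda>s. c) = c" and maxE_const: "maxE C (\<lambda>s. c) = c"
proof -
  have "(\<lambda>p. sint p (\<lambda>s. c)) ` C = (\<lambda>p. c) ` C"
    using assms(2) sint_const[OF assms(1)] by (intro image_cong) auto
  also have "\<dots> = {c}"
    using assms(3) by blast
  finally have "(\<lambda>p. sint p (\<lambda>s. c)) ` C = {c}" .
  then show "minE C (\<lambda>s. c) = c" "maxE C (\<lambda>s. c) = c"
    unfolding minE_def maxE_def by simp_all
qed

section \<open>Separating a prior from a convex compact set of priors\<close>

lemma fa_probs_eqI:
  assumes "p \<in> fa_probs Alg" "q \<in> fa_probs Alg" "\<And>A. A \<in> Alg \<Longrightarrow> p A = q A"
  shows "p = q"
proof
  fix A
  show "p A = q A"
    using assms unfolding fa_probs_def by (cases "A \<in> Alg") auto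
qed

lemma finite_separating_events:
  assumes "wstar_compact Alg C" "C \<subseteq> fa_probs Alg" "p0 \<in> fa_probs Alg" "p0 \<notin> C"
  shows "\<exists>F. finite F \<and> F \<subseteq> Alg \<and> (\<forall>p\<in>C. \<exists>A\<in>F. p A \<noteq> p0 A)"
proof (rule ccontr)
  assume no_F: "\<not> ?thesis"
  let ?T = "product_topology (\<lambda>_. euclideanreal) Alg"
  let ?K = "(\<lambda>p. restrict p Alg) ` C"
  let ?Z = "\<lambda>A. {q \<in> topspace ?T. q A \<in> {p0 A}}"
  have closed: "closedin ?T Z" if Z: "Z \<in> ?Z ` Alg" for Z
  proof -
    obtain A where A: "A \<in> Alg" "Z = ?Z A"
      using Z by blast
    show ?thesis
      unfolding A(2)
      by (rule closedin_continuous_map_preimage[OF continuous_map_product_projection[OF A(1)]]) simp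
  qed
  \<comment> \<open>Without such F the closed sets ?Z A have the finite intersection property on ?K.\<close>
  have "?K \<inter> \<Inter>\<F> \<noteq> {}" if \<F>: "finite \<F>" "\<F> \<subseteq> ?Z ` Alg" for \<F>
  proof -
    obtain F where F: "F \<subseteq> Alg" "finite F" "\<F> = ?Z ` F"
      using finite_subset_image[OF \<F>] by (elim exE conjE)
    have "\<not> (\<forall>p\<in>C. \<exists>A\<in>F. p A \<noteq> p0 A)"
      using no_F F(1,2) by blast
    then obtain p where p: "p \<in> C" "\<And>A. A \<in> F \<Longrightarrow> p A = p0 A"
      by blast
    have "restrict p Alg \<in> ?Z A" if "A \<in> F" for A
      using that F(1) p(2) by auto
    then have "restrict p Alg \<in> \<Inter>\<F>"
      unfolding F(3) by blast
    moreover have "restrict p Alg \<in> ?K"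
      using p(1) by blast
    ultimately show ?thesis
      by blast
  qed
  moreover have "compactin ?T ?K"
    using assms(1) unfolding wstar_compact_def .
  ultimately have "?K \<inter> \<Inter>(?Z ` Alg) \<noteq> {}"
    using closed unfolding compactin_fip by (metis (no_types, lifting))
  then obtain p where p: "p \<in> C" "restrict p Alg \<in> \<Inter>(?Z ` Alg)"
    by blast
  have "p A = p0 A" if "A \<in> Alg" for A
    using p(2) that by auto
  then have "p = p0"
    using p(1) assms(2,3) by (intro fa_probs_eqI) auto
  then show False
    using \<open>p \<in> C\<close> assms(4) by simp
qed

lemma nonneg_if_perturbations_nonneg:
  fixes a b :: real
  assumes "\<And>t. 0 < t \<Longrightarrow> t \<le> 1 \<Longrightarrow> 0 \<le> a + t * b"
  shows "0 \<le> a"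
proof -
  have "((\<lambda>t. a + t * b) \<longlongrightarrow> a + 0 * b) (at_right 0)"
    by (intro tendsto_intros)
  moreover have "eventually (\<lambda>t. 0 \<le> a + t * b) (at_right (0::real))"
    unfolding eventually_at_right_field using assms by (intro exI[of _ 1]) auto
  ultimately show ?thesis
    using tendsto_lowerbound trivial_limit_at_right_real by fastforce
qed

lemma convex_probs_nearest_point_ineq:
  fixes p0 ps p :: "'s set \<Rightarrow> real"
  assumes "convex_probs K" "ps \<in> K" "p \<in> K"
    and nearest: "\<And>q. q \<in> K \<Longrightarrow> (\<Sum>A\<in>F. (ps A - p0 A)\<^sup>2) \<le> (\<Sum>A\<in>F. (q A - p0 A)\<^sup>2)"
  shows "0 \<le> (\<Sum>A\<in>F. (ps A - p0 A) * (p A - ps A))"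
proof -
  let ?L = "\<Sum>A\<in>F. (ps A - p0 A) * (p A - ps A)"
  let ?Q = "\<Sum>A\<in>F. (p A - ps A)\<^sup>2"
  have "0 \<le> 2 * ?L + t * ?Q" if "0 < t" "t \<le> 1" for t
  proof -
    define q where "q A = t * p A + (1 - t) * ps A" for A
    have "q \<in> K"
      using assms(1-3) that unfolding convex_probs_def q_def by auto
    have "(\<Sum>A\<in>F. (q A - p0 A)\<^sup>2)
        = (\<Sum>A\<in>F. (ps A - p0 A)\<^sup>2 + t * (2 * ((ps A - p0 A) * (p A - ps A)) + t * (p A - ps A)\<^sup>2))"
      by (intro sum.cong) (simp_all add: q_def power2_eq_square algebra_simps)
    also have "\<dots> = (\<Sum>A\<in>F. (ps A - p0 A)\<^sup>2) + t * (2 * ?L + t * ?Q)"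
      by (simp add: sum.distrib sum_distrib_left distrib_left)
    finally have "0 \<le> t * (2 * ?L + t * ?Q)"
      using nearest[OF \<open>q \<in> K\<close>] by simp
    then show ?thesis
      using \<open>0 < t\<close> by (simp add: zero_le_mult_iff)
  qed
  then have "0 \<le> 2 * ?L"
    by (rule nonneg_if_perturbations_nonneg)
  then show ?thesis
    by simp
qed

lemma linear_separation:
  assumes C: "good_prior_set Alg C" "C \<noteq> {}" and p0: "p0 \<in> fa_probs Alg" "p0 \<notin> C"
  obtains F \<delta> w where "finite F" "F \<subseteq> Alg" "\<delta> > 0"
    "\<And>p. p \<in> C \<Longrightarrow> (\<Sum>A\<in>F. w A * p0 A) + \<delta> \<le> (\<Sum>A\<in>F. w A * p A)"
proof -
  note probs = good_prior_setD(1)[OF C(1)] and convex = good_prior_setD(2)[OF C(1)]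
    and compact = good_prior_setD(3)[OF C(1)]
  obtain F where F: "finite F" "F \<subseteq> Alg" "\<And>p. p \<in> C \<Longrightarrow> \<exists>A\<in>F. p A \<noteq> p0 A"
    using finite_separating_events[OF compact probs p0] by blast
  define d where "d q = (\<Sum>A\<in>F. (q A - p0 A)\<^sup>2)" for q :: "'a set \<Rightarrow> real"
  have "compact (d ` C)"
  proof (rule compact_image_wstar_compact[OF compact])
    show "continuous_map (product_topology (\<lambda>_. euclideanreal) Alg) euclideanreal
        (\<lambda>q. \<Sum>A\<in>F. (q A - p0 A)\<^sup>2)"
      using F(1,2) by (intro continuous_map_sum continuous_map_real_pow continuous_map_diff
          continuous_map_product_projection continuous_map_canonical_const) auto
    show "d q = (\<Sum>A\<in>F. (restrict q Alg A - p0 A)\<^sup>2)" for q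
      using F(2) unfolding d_def by (intro sum.cong) auto
  qed
  then obtain ps where ps: "ps \<in> C" "\<And>q. q \<in> C \<Longrightarrow> d ps \<le> d q"
    using compact_attains_inf[of "d ` C"] C(2) by auto
  \<comment> \<open>ps is the point of C nearest to p0 in the coordinates F; w = ps - p0 is the normal.\<close>
  define w where "w A = ps A - p0 A" for A
  have "d ps > 0"
  proof -
    obtain A where A: "A \<in> F" "ps A \<noteq> p0 A"
      using F(3) ps(1) by blast
    then have "0 < (ps A - p0 A)\<^sup>2"
      by simp
    also have "\<dots> \<le> d ps"
      unfolding d_def using A(1) F(1) by (intro member_le_sum) auto
    finally show ?thesis .
  qed
  then show ?thesis
  proof (rule that[OF F(1,2)])
    fix p assume "p \<in> C"
    have "(\<Sum>A\<in>F. w A * p A) = (\<Sum>A\<in>F. w A * p0 A + (ps A - p0 A)\<^sup>2 + (ps A - p0 A) * (p A - ps A))"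
      by (intro sum.cong) (simp_all add: w_def power2_eq_square algebra_simps)
    also have "\<dots> = (\<Sum>A\<in>F. w A * p0 A) + d ps + (\<Sum>A\<in>F. (ps A - p0 A) * (p A - ps A))"
      by (simp add: d_def sum.distrib)
    finally show "(\<Sum>A\<in>F. w A * p0 A) + d ps \<le> (\<Sum>A\<in>F. w A * p A)"
      using convex_probs_nearest_point_ineq[OF convex ps(1) \<open>p \<in> C\<close>] ps(2) unfolding d_def by simp
  qed
qed

lemma affine_rescale_into_interval:
  fixes \<phi> :: "'a \<Rightarrow> real"
  assumes "finite (range \<phi>)" "lo < hi"
  obtains a k where "0 < k" "\<And>s. a + k * \<phi> s \<in> {lo..hi}"
proof -
  obtain M where M: "\<And>s. \<bar>\<phi> s\<bar> \<le> M"
    using finite_imp_bounded[OF assms(1)] unfolding bounded_real by blast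
  then have "0 \<le> M"
    using abs_ge_zero order_trans by blast
  define k where "k = (hi - lo) / (2 * (M + 1))"
  have "0 < k"
    unfolding k_def using assms(2) \<open>0 \<le> M\<close> by simp
  moreover have "(lo + hi) / 2 + k * \<phi> s \<in> {lo..hi}" for s
  proof -
    have "\<bar>k * \<phi> s\<bar> \<le> k * M"
      using M[of s] \<open>0 < k\<close> by (simp add: abs_mult)
    also have "\<dots> \<le> (hi - lo) / 2"
      unfolding k_def using assms(2) \<open>0 \<le> M\<close> by (simp add: field_simps)
    finally have bound: "\<bar>k * \<phi> s\<bar> \<le> (hi - lo) / 2" .
    show ?thesis
      using abs_le_D1[OF bound] abs_le_D2[OF bound] unfolding atLeastAtMost_iff
      by (simp add: field_simps)
  qed
  ultimately show ?thesis
    using that by blast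
qed

context
  fixes Alg :: "'s set set"
  assumes alg: "algebra UNIV Alg"
begin

lemma separating_simple_fun:
  assumes C: "good_prior_set Alg C" "C \<noteq> {}" and p0: "p0 \<in> fa_probs Alg" "p0 \<notin> C"
    and "lo < hi"
  obtains \<psi> c where "simple_fun Alg \<psi>" "\<And>s. \<psi> s \<in> {lo..hi}" "c \<in> {lo..hi}"
    "\<And>p. p \<in> C \<Longrightarrow> c < sint p \<psi>" "sint p0 \<psi> < c"
proof -
  note probs = good_prior_setD(1)[OF C(1)]
  obtain F \<delta> w where F: "finite F" "F \<subseteq> Alg" "\<delta> > 0"
    "\<And>p. p \<in> C \<Longrightarrow> (\<Sum>A\<in>F. w A * p0 A) + \<delta> \<le> (\<Sum>A\<in>F. w A * p A)"
    by (rule linear_separation[OF C p0]) blast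
  define \<phi> where "\<phi> s = (\<Sum>A\<in>F. w A * indicator A s)" for s
  have \<phi>: "simple_fun Alg \<phi>" "\<And>p. p \<in> fa_probs Alg \<Longrightarrow> sint p \<phi> = (\<Sum>A\<in>F. w A * p A)"
    using simple_fun_sint_indicator_comb[OF alg _ F(1,2)] p0(1) unfolding \<phi>_def by blast+
  have "finite (range \<phi>)"
    using \<phi>(1) unfolding simple_fun_def by blast
  then obtain a k where k: "0 < k" "\<And>s. a + k * \<phi> s \<in> {lo..hi}"
    using \<open>lo < hi\<close> by (rule affine_rescale_into_interval) blast
  define \<psi> where "\<psi> s = a + k * \<phi> s" for s
  have \<psi>: "simple_fun Alg \<psi>"
    unfolding \<psi>_def by (rule simple_fun_comp[OF alg \<phi>(1)])
  have range: "\<psi> s \<in> {lo..hi}" for s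
    unfolding \<psi>_def by (rule k(2))
  have sint_\<psi>: "sint p \<psi> = a + k * (\<Sum>A\<in>F. w A * p A)" if "p \<in> fa_probs Alg" for p
    unfolding \<psi>_def using sint_affine[OF alg that \<phi>(1)] \<phi>(2)[OF that] by simp
  define c where "c = a + k * ((\<Sum>A\<in>F. w A * p0 A) + \<delta> / 2)"
  have below: "sint p0 \<psi> < c"
    unfolding c_def sint_\<psi>[OF p0(1)] using k(1) F(3) by simp
  have above: "c < sint p \<psi>" if "p \<in> C" for p
    unfolding c_def sint_\<psi>[OF subsetD[OF probs that]] using k(1) F(3) F(4)[OF that]
    by (simp add: mult_strict_left_mono)
  obtain p1 where "p1 \<in> C"
    using C(2) by blast
  have "sint p0 \<psi> \<in> {lo..hi}" "sint p1 \<psi> \<in> {lo..hi}"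
    using sint_bounds[OF alg p0(1) \<psi> range] sint_bounds[OF alg _ \<psi> range] probs \<open>p1 \<in> C\<close> by auto
  then have "c \<in> {lo..hi}"
    using below above[OF \<open>p1 \<in> C\<close>] by simp
  then show ?thesis
    using that[OF \<psi> range] above below by blast
qed

lemma subset_if_lower_bounds_inherited:
  assumes D: "good_prior_set Alg D" "D \<noteq> {}" and C: "C \<subseteq> fa_probs Alg" and "lo < hi"
    and inherit: "\<And>\<psi> c. simple_fun Alg \<psi> \<Longrightarrow> (\<And>s. \<psi> s \<in> {lo..hi}) \<Longrightarrow> c \<in> {lo..hi} \<Longrightarrow>
      \<forall>p\<in>D. c < sint p \<psi> \<Longrightarrow> \<forall>p\<in>C. c < sint p \<psi>"
  shows "C \<subseteq> D"
proof
  fix p0 assume "p0 \<in> C"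
  show "p0 \<in> D"
  proof (rule ccontr)
    assume "p0 \<notin> D"
    obtain \<psi> c where "simple_fun Alg \<psi>" "\<And>s. \<psi> s \<in> {lo..hi}" "c \<in> {lo..hi}"
      "\<And>p. p \<in> D \<Longrightarrow> c < sint p \<psi>" "sint p0 \<psi> < c"
      by (rule separating_simple_fun[OF D subsetD[OF C \<open>p0 \<in> C\<close>] \<open>p0 \<notin> D\<close> \<open>lo < hi\<close>]) blast
    then show False
      using inherit \<open>p0 \<in> C\<close> by fastforce
  qed
qed

lemma subset_if_upper_bounds_inherited:
  assumes D: "good_prior_set Alg D" "D \<noteq> {}" and C: "C \<subseteq> fa_probs Alg" and "lo < hi"
    and inherit: "\<And>\<psi> c. simple_fun Alg \<psi> \<Longrightarrow> (\<And>s. \<psi> s \<in> {lo..hi}) \<Longrightarrow> c \<in> {lo..hi} \<Longrightarrow>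
      \<forall>p\<in>D. sint p \<psi> < c \<Longrightarrow> \<forall>p\<in>C. sint p \<psi> < c"
  shows "C \<subseteq> D"
proof (rule subset_if_lower_bounds_inherited[OF D C \<open>lo < hi\<close>])
  fix \<psi> c
  assume \<psi>: "simple_fun Alg \<psi>" "\<And>s. \<psi> s \<in> {lo..hi}" and "c \<in> {lo..hi}"
    and lower: "\<forall>p\<in>D. c < sint p \<psi>"
  define \<psi>' where "\<psi>' s = lo + hi - \<psi> s" for s
  have sint_\<psi>': "sint p \<psi>' = lo + hi - sint p \<psi>" if "p \<in> fa_probs Alg" for p
    unfolding \<psi>'_def using sint_affine[OF alg that \<psi>(1), of "lo + hi" "-1"] by simp
  have "simple_fun Alg \<psi>'"
    unfolding \<psi>'_def by (rule simple_fun_comp[OF alg \<psi>(1)])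
  moreover have "\<psi>' s \<in> {lo..hi}" for s
    using \<psi>(2)[of s] unfolding \<psi>'_def by auto
  moreover have "lo + hi - c \<in> {lo..hi}"
    using \<open>c \<in> {lo..hi}\<close> by auto
  moreover have "\<forall>p\<in>D. sint p \<psi>' < lo + hi - c"
    using lower good_prior_setD(1)[OF D(1)] sint_\<psi>' by auto
  ultimately have "\<forall>p\<in>C. sint p \<psi>' < lo + hi - c"
    by (rule inherit)
  then show "\<forall>p\<in>C. c < sint p \<psi>"
    using C sint_\<psi>' by fastforce
qed

end

section \<open>Comparing the representations\<close>

lemma simple_act_with_utility:
  assumes "algebra UNIV Alg" "convex X" "affine_on X u" "x \<in> X" "y \<in> X" "u x < u y"
    and "simple_fun Alg \<psi>" "\<And>s. \<psi> s \<in> {u x..u y}"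
  shows "\<exists>f\<in>simple_acts Alg X. u \<circ> f = \<psi>"
proof -
  define t where "t s = (\<psi> s - u x) / (u y - u x)" for s
  define f where "f s = t s *\<^sub>R y + (1 - t s) *\<^sub>R x" for s
  have t: "0 \<le> t s" "t s \<le> 1" for s
    using assms(6) assms(8)[of s] unfolding t_def by (auto simp: field_simps)
  have "f s \<in> X" for s
    using t[of s] assms(2,4,5) unfolding f_def convex_def by auto
  moreover have "u (f s) = \<psi> s" for s
  proof -
    have "u (f s) = t s * u y + (1 - t s) * u x"
      using assms(3-5) t[of s] unfolding f_def affine_on_def by blast
    also have "\<dots> = u x + t s * (u y - u x)"
      by (simp add: algebra_simps)
    also have "\<dots> = \<psi> s"
      unfolding t_def using assms(6) by simp
    finally show ?thesis .
  qed
  moreover have "simple_fun Alg f"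
    unfolding f_def t_def by (rule simple_fun_comp[OF assms(1,7)])
  ultimately have "f \<in> simple_acts Alg X \<and> u \<circ> f = \<psi>"
    by (auto simp: simple_acts_iff)
  then show ?thesis
    by blast
qed

lemma HP_repD:
  assumes "HP_rep Alg X P u C D"
  shows "good_prior_set Alg C" "good_prior_set Alg D" "C \<inter> D \<noteq> {}" "C \<noteq> {}" "D \<noteq> {}"
    and "\<And>f g. f \<in> simple_acts Alg X \<Longrightarrow> g \<in> simple_acts Alg X \<Longrightarrow>
      P f g \<longleftrightarrow> minE C (u \<circ> g) < minE C (u \<circ> f) \<and> maxE D (u \<circ> g) < maxE D (u \<circ> f)"
  using assms unfolding HP_rep_def by auto

lemma TM_repD:
  assumes "TM_rep Alg X P u C D"
  shows "good_prior_set Alg C" "good_prior_set Alg D" "C \<inter> D \<noteq> {}" "C \<noteq> {}" "D \<noteq> {}"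
    and "\<And>f g. f \<in> simple_acts Alg X \<Longrightarrow> g \<in> simple_acts Alg X \<Longrightarrow>
      P f g \<longleftrightarrow> maxE D (u \<circ> g) < minE C (u \<circ> f)"
  using assms unfolding TM_rep_def by auto

lemma B_repD:
  assumes "B_rep Alg X P u C"
  shows "good_prior_set Alg C" "C \<noteq> {}"
    and "\<And>f g. f \<in> simple_acts Alg X \<Longrightarrow> g \<in> simple_acts Alg X \<Longrightarrow>
      P f g \<longleftrightarrow> (\<forall>p\<in>C. sint p (u \<circ> g) < sint p (u \<circ> f))"
  using assms unfolding B_rep_def by auto

locale affine_utility =
  fixes Alg :: "'s set set" and X :: "'x::real_vector set" and u :: "'x \<Rightarrow> real"
  assumes algebra: "algebra UNIV Alg" and convex: "convex X" and affine: "affine_on X u"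
    and nonconstant: "\<exists>x\<in>X. \<exists>y\<in>X. u x \<noteq> u y"
begin

abbreviation "acts \<equiv> simple_acts Alg X"

lemma simple_fun_utility: "f \<in> acts \<Longrightarrow> simple_fun Alg (u \<circ> f)"
  unfolding simple_acts_iff comp_def using simple_fun_comp[OF algebra] by blast

lemma realisable_utility_interval:
  obtains lo hi where "lo < hi"
    "\<And>\<psi> c. simple_fun Alg \<psi> \<Longrightarrow> (\<And>s. \<psi> s \<in> {lo..hi}) \<Longrightarrow> c \<in> {lo..hi} \<Longrightarrow>
      \<exists>f\<in>acts. \<exists>g\<in>acts. u \<circ> f = \<psi> \<and> u \<circ> g = (\<lambda>s. c)"
proof -
  obtain x y where xy: "x \<in> X" "y \<in> X" "u x < u y"
    using nonconstant by (metis linorder_neqE)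
  note act = simple_act_with_utility[OF algebra convex affine xy]
  show ?thesis
  proof (rule that[OF xy(3)])
    fix \<psi> c assume "simple_fun Alg \<psi>" "\<And>s. \<psi> s \<in> {u x..u y}" "c \<in> {u x..u y}"
    then show "\<exists>f\<in>acts. \<exists>g\<in>acts. u \<circ> f = \<psi> \<and> u \<circ> g = (\<lambda>s. c)"
      using act act[OF simple_fun_const[OF algebra]] by blast
  qed
qed

lemma subset_if_act_lower_bounds_inherited:
  assumes D: "good_prior_set Alg D" "D \<noteq> {}" and C: "C \<subseteq> fa_probs Alg"
    and inherit: "\<And>f g c. f \<in> acts \<Longrightarrow> g \<in> acts \<Longrightarrow> u \<circ> g = (\<lambda>s. c) \<Longrightarrow>
      \<forall>p\<in>D. c < sint p (u \<circ> f) \<Longrightarrow> \<forall>p\<in>C. c < sint p (u \<circ> f)"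
  shows "C \<subseteq> D"
proof -
  obtain lo hi where "lo < hi" and acts: "\<And>\<psi> c. simple_fun Alg \<psi> \<Longrightarrow> (\<And>s. \<psi> s \<in> {lo..hi}) \<Longrightarrow>
      c \<in> {lo..hi} \<Longrightarrow> \<exists>f\<in>acts. \<exists>g\<in>acts. u \<circ> f = \<psi> \<and> u \<circ> g = (\<lambda>s. c)"
    using realisable_utility_interval by blast
  show ?thesis
  proof (rule subset_if_lower_bounds_inherited[OF algebra D C \<open>lo < hi\<close>])
    fix \<psi> c assume "simple_fun Alg \<psi>" "\<And>s. \<psi> s \<in> {lo..hi}" "c \<in> {lo..hi}"
      and bound: "\<forall>p\<in>D. c < sint p \<psi>"
    then obtain f g where "f \<in> acts" "g \<in> acts" "u \<circ> f = \<psi>" "u \<circ> g = (\<lambda>s. c)"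
      using acts by blast
    then show "\<forall>p\<in>C. c < sint p \<psi>"
      using inherit bound by blast
  qed
qed

lemma subset_if_act_upper_bounds_inherited:
  assumes D: "good_prior_set Alg D" "D \<noteq> {}" and C: "C \<subseteq> fa_probs Alg"
    and inherit: "\<And>f g c. f \<in> acts \<Longrightarrow> g \<in> acts \<Longrightarrow> u \<circ> g = (\<lambda>s. c) \<Longrightarrow>
      \<forall>p\<in>D. sint p (u \<circ> f) < c \<Longrightarrow> \<forall>p\<in>C. sint p (u \<circ> f) < c"
  shows "C \<subseteq> D"
proof -
  obtain lo hi where "lo < hi" and acts: "\<And>\<psi> c. simple_fun Alg \<psi> \<Longrightarrow> (\<And>s. \<psi> s \<in> {lo..hi}) \<Longrightarrow>
      c \<in> {lo..hi} \<Longrightarrow> \<exists>f\<in>acts. \<exists>g\<in>acts. u \<circ> f = \<psi> \<and> u \<circ> g = (\<lambda>s. c)"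
    using realisable_utility_interval by blast
  show ?thesis
  proof (rule subset_if_upper_bounds_inherited[OF algebra D C \<open>lo < hi\<close>])
    fix \<psi> c assume "simple_fun Alg \<psi>" "\<And>s. \<psi> s \<in> {lo..hi}" "c \<in> {lo..hi}"
      and bound: "\<forall>p\<in>D. sint p \<psi> < c"
    then obtain f g where "f \<in> acts" "g \<in> acts" "u \<circ> f = \<psi>" "u \<circ> g = (\<lambda>s. c)"
      using acts by blast
    then show "\<forall>p\<in>C. sint p \<psi> < c"
      using inherit bound by blast
  qed
qed

lemma Bewley_more_conservative_than_HP_if:
  assumes B: "B_rep Alg X PB u CB" and HP: "HP_rep Alg X PHP u C D" and "C \<union> D \<subseteq> CB"
  shows "more_conservative acts PB PHP"
  unfolding more_conservative_def
proof (intro ballI impI)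
  fix f g assume acts: "f \<in> acts" "g \<in> acts" and "PB f g"
  then have better: "sint p (u \<circ> g) < sint p (u \<circ> f)" if "p \<in> CB" for p
    using B_repD(3)[OF B] that by blast
  note simple = simple_fun_utility[OF acts(1)] simple_fun_utility[OF acts(2)]
  have "minE C (u \<circ> g) < minE C (u \<circ> f)"
    using good_prior_setD(3)[OF HP_repD(1)[OF HP]] HP_repD(4)[OF HP] simple better assms(3)
    by (intro minE_strict_mono) auto
  moreover have "maxE D (u \<circ> g) < maxE D (u \<circ> f)"
    using good_prior_setD(3)[OF HP_repD(2)[OF HP]] HP_repD(5)[OF HP] simple better assms(3)
    by (intro maxE_strict_mono) auto
  ultimately show "PHP f g"
    using HP_repD(6)[OF HP acts] by blast
qed

lemma Bewley_more_conservative_than_HP_only_if: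
  assumes B: "B_rep Alg X PB u CB" and HP: "HP_rep Alg X PHP u C D"
    and mc: "more_conservative acts PB PHP"
  shows "C \<union> D \<subseteq> CB"
proof -
  note CB = B_repD(1,2)[OF B] and C = HP_repD(1,4)[OF HP] and D = HP_repD(2,5)[OF HP]
  have sint_CB: "sint p (u \<circ> g) = c" if "u \<circ> g = (\<lambda>s. c)" "p \<in> CB" for p g c
    using that sint_const[OF algebra] good_prior_setD(1)[OF CB(1)] by auto
  have "C \<subseteq> CB"
  proof (rule subset_if_act_lower_bounds_inherited[OF CB good_prior_setD(1)[OF C(1)]])
    fix f g c assume fg: "f \<in> acts" "g \<in> acts" "u \<circ> g = (\<lambda>s. c)"
      and "\<forall>p\<in>CB. c < sint p (u \<circ> f)"
    then have "PHP f g"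
      using mc B_repD(3)[OF B fg(1,2)] sint_CB unfolding more_conservative_def by auto
    then have "c < minE C (u \<circ> f)"
      using HP_repD(6)[OF HP fg(1,2)] fg(3) minE_const[OF algebra good_prior_setD(1)[OF C(1)] C(2)] by simp
    then show "\<forall>p\<in>C. c < sint p (u \<circ> f)"
      using less_minE_iff[OF good_prior_setD(3)[OF C(1)] simple_fun_utility[OF fg(1)] C(2)] by blast
  qed
  moreover have "D \<subseteq> CB"
  proof (rule subset_if_act_upper_bounds_inherited[OF CB good_prior_setD(1)[OF D(1)]])
    fix f g c assume fg: "f \<in> acts" "g \<in> acts" "u \<circ> g = (\<lambda>s. c)"
      and "\<forall>p\<in>CB. sint p (u \<circ> f) < c"
    then have "PHP g f"
      using mc B_repD(3)[OF B fg(2,1)] sint_CB unfolding more_conservative_def by auto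
    then have "maxE D (u \<circ> f) < c"
      using HP_repD(6)[OF HP fg(2,1)] fg(3) maxE_const[OF algebra good_prior_setD(1)[OF D(1)] D(2)] by simp
    then show "\<forall>p\<in>D. sint p (u \<circ> f) < c"
      using maxE_less_iff[OF good_prior_setD(3)[OF D(1)] simple_fun_utility[OF fg(1)] D(2)] by blast
  qed
  ultimately show ?thesis
    by blast
qed

lemma twofold_more_conservative_than_HP_if:
  assumes T: "TM_rep Alg X PT u CT DT" and HP: "HP_rep Alg X PHP u C D"
    and "C \<subseteq> CT" "D \<subseteq> DT"
  shows "more_conservative acts PT PHP"
  unfolding more_conservative_def
proof (intro ballI impI)
  fix f g assume acts: "f \<in> acts" "g \<in> acts" and "PT f g"
  then have "maxE DT (u \<circ> g) < minE CT (u \<circ> f)"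
    using TM_repD(6)[OF T] by blast
  note simple = simple_fun_utility[OF acts(1)] simple_fun_utility[OF acts(2)]
  note compact = good_prior_setD(3)[OF HP_repD(1)[OF HP]] good_prior_setD(3)[OF HP_repD(2)[OF HP]]
  have "minE CT (u \<circ> f) \<le> minE C (u \<circ> f)"
    by (rule minE_antimono[OF good_prior_setD(3)[OF TM_repD(1)[OF T]] simple(1) HP_repD(4)[OF HP] assms(3)])
  moreover have "maxE D (u \<circ> g) \<le> maxE DT (u \<circ> g)"
    by (rule maxE_mono[OF good_prior_setD(3)[OF TM_repD(2)[OF T]] simple(2) HP_repD(5)[OF HP] assms(4)])
  moreover have "minE C h \<le> maxE D h" if "simple_fun Alg h" for h
    using compact that HP_repD(3)[OF HP] by (rule minE_le_maxE)
  ultimately show "PHP f g"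
    unfolding HP_repD(6)[OF HP acts]
    using \<open>maxE DT (u \<circ> g) < minE CT (u \<circ> f)\<close> simple by (meson le_less_trans less_le_trans)
qed

lemma twofold_more_conservative_than_HP_only_if:
  assumes T: "TM_rep Alg X PT u CT DT" and HP: "HP_rep Alg X PHP u C D"
    and mc: "more_conservative acts PT PHP"
  shows "C \<subseteq> CT" "D \<subseteq> DT"
proof -
  note CT = TM_repD(1,4)[OF T] and DT = TM_repD(2,5)[OF T]
  note C = HP_repD(1,4)[OF HP] and D = HP_repD(2,5)[OF HP]
  note constant_values = minE_const[OF algebra good_prior_setD(1)[OF CT(1)] CT(2)]
    maxE_const[OF algebra good_prior_setD(1)[OF DT(1)] DT(2)]
    minE_const[OF algebra good_prior_setD(1)[OF C(1)] C(2)]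
    maxE_const[OF algebra good_prior_setD(1)[OF D(1)] D(2)]
  show "C \<subseteq> CT"
  proof (rule subset_if_act_lower_bounds_inherited[OF CT good_prior_setD(1)[OF C(1)]])
    fix f g c assume fg: "f \<in> acts" "g \<in> acts" "u \<circ> g = (\<lambda>s. c)"
      and "\<forall>p\<in>CT. c < sint p (u \<circ> f)"
    then have "PT f g"
      using TM_repD(6)[OF T fg(1,2)] less_minE_iff[OF good_prior_setD(3)[OF CT(1)] simple_fun_utility[OF fg(1)] CT(2)]
        constant_values by simp
    then have "c < minE C (u \<circ> f)"
      using mc fg HP_repD(6)[OF HP fg(1,2)] constant_values unfolding more_conservative_def by simp
    then show "\<forall>p\<in>C. c < sint p (u \<circ> f)"
      using less_minE_iff[OF good_prior_setD(3)[OF C(1)] simple_fun_utility[OF fg(1)] C(2)] by blast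
  qed
  show "D \<subseteq> DT"
  proof (rule subset_if_act_upper_bounds_inherited[OF DT good_prior_setD(1)[OF D(1)]])
    fix f g c assume fg: "f \<in> acts" "g \<in> acts" "u \<circ> g = (\<lambda>s. c)"
      and "\<forall>p\<in>DT. sint p (u \<circ> f) < c"
    then have "PT g f"
      using TM_repD(6)[OF T fg(2,1)] maxE_less_iff[OF good_prior_setD(3)[OF DT(1)] simple_fun_utility[OF fg(1)] DT(2)]
        constant_values by simp
    then have "maxE D (u \<circ> f) < c"
      using mc fg HP_repD(6)[OF HP fg(2,1)] constant_values unfolding more_conservative_def by simp
    then show "\<forall>p\<in>D. sint p (u \<circ> f) < c"
      using maxE_less_iff[OF good_prior_setD(3)[OF D(1)] simple_fun_utility[OF fg(1)] D(2)] by blast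
  qed
qed

end

theorem proposition1:
  fixes Alg :: "'s set set" and X :: "'x::real_vector set" and u :: "'x \<Rightarrow> real"
    and PHP PT PB :: "('s \<Rightarrow> 'x) \<Rightarrow> ('s \<Rightarrow> 'x) \<Rightarrow> bool"
    and CHP DHP CT DT CB :: "('s set \<Rightarrow> real) set"
  assumes "algebra UNIV Alg"
    and "convex X" and "\<exists>x\<in>X. \<exists>y\<in>X. x \<noteq> y"
    and "affine_on X u" and "\<exists>x\<in>X. \<exists>y\<in>X. u x \<noteq> u y"
    and "HP_unique_rep Alg X PHP u CHP DHP"
    and "TM_unique_rep Alg X PT u CT DT"
    and "B_unique_rep Alg X PB u CB"
  shows "(more_conservative (simple_acts Alg X) PB PHP \<longleftrightarrow> CHP \<union> DHP \<subseteq> CB)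
       \<and> (more_conservative (simple_acts Alg X) PT PHP \<longleftrightarrow> CHP \<subseteq> CT \<and> DHP \<subseteq> DT)"
proof -
  interpret affine_utility Alg X u
    using assms(1,2,4,5) by (rule affine_utility.intro)
  have HP: "HP_rep Alg X PHP u CHP DHP" and T: "TM_rep Alg X PT u CT DT" and B: "B_rep Alg X PB u CB"
    using assms(6-8) unfolding HP_unique_rep_def TM_unique_rep_def B_unique_rep_def by blast+
  show ?thesis
    using Bewley_more_conservative_than_HP_if[OF B HP] Bewley_more_conservative_than_HP_only_if[OF B HP]
      twofold_more_conservative_than_HP_if[OF T HP] twofold_more_conservative_than_HP_only_if[OF T HP]
    by blast
qed

end
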